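(* Let $k \geq 1$. Every $k$-degenerate graph $G$ on $n$ vertices is $(k,b)$-colorable for every integer $b \geq 4k\sqrt{k+1}\sqrt{n}$. In other words, $\mathrm{ex}_k(\mathcal{D}_k)(n) \leq 4k\sqrt{k+1}\sqrt{n}$, where $\mathcal{D}_k$ is the class of $k$-degenerate graphs.
   Context: A graph is $k$-degenerate if every subgraph has a vertex of degree at most $k$. A set of vertices $X$ is $2$-independent if any two distinct vertices of $X$ are at distance at least $3$. A graph $G$ is $(a,b)$-colorable if $V(G)$ can be partitioned into $a$ independent sets and $b$ $2$-independent sets (some parts may be empty). For a class $\mathcal{C}$ of graphs, $\mathrm{ex}_a(\mathcal{C})(n)$ denotes the smallest integer $c$ such that every graph of order $n$ in $\mathcal{C}$ is $(a,c)$-colorable. *)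

theory Defs
  imports Complex_Main
begin

definition graph :: "'a set \<Rightarrow> ('a \<Rightarrow> 'a \<Rightarrow> bool) \<Rightarrow> bool" where
  "graph V E \<longleftrightarrow> finite V \<and> (\<forall>x y. E x y \<longrightarrow> x \<in> V \<and> y \<in> V) \<and>
     (\<forall>x y. E x y \<longrightarrow> E y x) \<and> (\<forall>x. \<not> E x x)"

definition degenerate :: "nat \<Rightarrow> 'a set \<Rightarrow> ('a \<Rightarrow> 'a \<Rightarrow> bool) \<Rightarrow> bool" where
  "degenerate k V E \<longleftrightarrow>
     (\<forall>S. S \<subseteq> V \<and> S \<noteq> {} \<longrightarrow> (\<exists>v\<in>S. card {u \<in> S. E v u} \<le> k))"

definition independent_set :: "('a \<Rightarrow> 'a \<Rightarrow> bool) \<Rightarrow> 'a set \<Rightarrow> bool" where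
  "independent_set E X \<longleftrightarrow> (\<forall>x\<in>X. \<forall>y\<in>X. \<not> E x y)"

definition two_independent_set :: "('a \<Rightarrow> 'a \<Rightarrow> bool) \<Rightarrow> 'a set \<Rightarrow> bool" where
  "two_independent_set E X \<longleftrightarrow>
     (\<forall>x\<in>X. \<forall>y\<in>X. x \<noteq> y \<longrightarrow> \<not> E x y \<and> \<not> (\<exists>z. E x z \<and> E z y))"

text \<open>(a,b)-colorable: V is partitioned into a independent sets (colours 0..a-1)
and b 2-independent sets (colours a..a+b-1); parts may be empty.\<close>
definition colorable :: "nat \<Rightarrow> nat \<Rightarrow> 'a set \<Rightarrow> ('a \<Rightarrow> 'a \<Rightarrow> bool) \<Rightarrow> bool" where
  "colorable a b V E \<longleftrightarrow>
     (\<exists>c :: 'a \<Rightarrow> nat. (\<forall>v\<in>V. c v < a + b) \<and>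
        (\<forall>i<a. independent_set E {v \<in> V. c v = i}) \<and>
        (\<forall>i. a \<le> i \<and> i < a + b \<longrightarrow> two_independent_set E {v \<in> V. c v = i}))"

end

(*
  Fix a degeneracy order: every vertex has at most k earlier neighbours, so the
  degree sum is at most 2kn.  Let D = ceiling (sqrt n).  At most 2k sqrt n
  vertices have degree at least D; each of them gets a private 2-independent
  color.  The others are colored greedily along the order.  A vertex takes one of
  the k independent colors unused by its earlier neighbours if possible;
  otherwise all its earlier neighbours have low degree, so at most
  k + 2k(D - 1) < 2kD earlier vertices lie within distance 2 of it and one of 2kD
  further 2-independent colors is free.  In total 2kD + 2k sqrt n, which is at most
  4k sqrt (k + 1) sqrt n, 2-independent colors are used.
*)
theory Submission
  imports Defs
begin

definition within_dist_2 :: "('a \<Rightarrow> 'a \<Rightarrow> bool) \<Rightarrow> 'a \<Rightarrow> 'a \<Rightarrow> bool" where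
  "within_dist_2 E u v \<longleftrightarrow> E u v \<or> (\<exists>z. E u z \<and> E z v)"

definition back_nbrs :: "('a \<Rightarrow> 'a \<Rightarrow> bool) \<Rightarrow> ('a \<Rightarrow> nat) \<Rightarrow> 'a \<Rightarrow> 'a set" where
  "back_nbrs E r v = {u. E v u \<and> r u < r v}"

definition degeneracy_order :: "nat \<Rightarrow> 'a set \<Rightarrow> ('a \<Rightarrow> 'a \<Rightarrow> bool) \<Rightarrow> ('a \<Rightarrow> nat) \<Rightarrow> bool" where
  "degeneracy_order k V E r \<longleftrightarrow> inj_on r V \<and> (\<forall>v\<in>V. card (back_nbrs E r v) \<le> k)"

definition ab_coloring :: "nat \<Rightarrow> nat \<Rightarrow> 'a set \<Rightarrow> ('a \<Rightarrow> 'a \<Rightarrow> bool) \<Rightarrow> ('a \<Rightarrow> nat) \<Rightarrow> bool" where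
  "ab_coloring a b V E c \<longleftrightarrow> (\<forall>v\<in>V. c v < a + b) \<and>
     (\<forall>i<a. independent_set E {v \<in> V. c v = i}) \<and>
     (\<forall>i. a \<le> i \<and> i < a + b \<longrightarrow> two_independent_set E {v \<in> V. c v = i})"

lemma colorable_iff_ab_coloring: "colorable a b V E \<longleftrightarrow> (\<exists>c. ab_coloring a b V E c)"
  unfolding colorable_def ab_coloring_def ..

lemma two_independent_set_iff:
  "two_independent_set E X \<longleftrightarrow> (\<forall>x\<in>X. \<forall>y\<in>X. x \<noteq> y \<longrightarrow> \<not> within_dist_2 E x y)"
  unfolding two_independent_set_def within_dist_2_def by blast

lemma graphD:
  assumes "graph V E"
  shows "finite V" and "E x y \<Longrightarrow> x \<in> V" and "E x y \<Longrightarrow> y \<in> V"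
    and "E x y \<Longrightarrow> E y x" and "\<not> E x x"
  using assms unfolding graph_def by blast+

lemma graph_finite_nbrs:
  assumes "graph V E"
  shows "finite {u. E v u \<and> P u}"
  using graphD[OF assms] by (auto intro: finite_subset[of _ V])

lemma within_dist_2_sym:
  assumes "graph V E" "within_dist_2 E u v"
  shows "within_dist_2 E v u"
  using assms graphD(4)[OF assms(1)] unfolding within_dist_2_def by blast

lemma colorable_mono:
  assumes "colorable a b V E" "b \<le> b'"
  shows "colorable a b' V E"
proof -
  obtain c where c: "ab_coloring a b V E c"
    using assms(1) colorable_iff_ab_coloring by blast
  have "two_independent_set E {v \<in> V. c v = i}" if "a + b \<le> i" for i
  proof -
    have "{v \<in> V. c v = i} = {}" using c that unfolding ab_coloring_def by fastforce
    then show ?thesis unfolding two_independent_set_def by blast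
  qed
  then have "ab_coloring a b' V E c"
    using c assms(2) unfolding ab_coloring_def by (metis add_le_mono le_refl less_le_trans not_le)
  then show ?thesis using colorable_iff_ab_coloring by blast
qed

lemma rank_recursion_exists:
  fixes r :: "'a \<Rightarrow> nat" and Q :: "'a \<Rightarrow> ('a \<Rightarrow> 'b) \<Rightarrow> 'b \<Rightarrow> bool"
  assumes "finite W"
    and solvable: "\<And>v g. v \<in> W \<Longrightarrow> \<exists>x. Q v g x"
    and depends_on_earlier:
      "\<And>v g g' x. v \<in> W \<Longrightarrow> (\<And>u. r u < r v \<Longrightarrow> g u = g' u) \<Longrightarrow> Q v g x \<Longrightarrow> Q v g' x"
  shows "\<exists>f. \<forall>v\<in>W. Q v f (f v)"
proof -
  have "S \<subseteq> W \<longrightarrow> (\<exists>f. \<forall>v\<in>S. Q v f (f v))" if "finite S" for S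
    using that
  proof (induction S rule: finite_ranking_induct[where f = r])
    case empty
    then show ?case by simp
  next
    case (insert x S)
    show ?case
    proof
      assume sub: "insert x S \<subseteq> W"
      then obtain f where f: "\<forall>v\<in>S. Q v f (f v)" using insert.IH by blast
      obtain a where a: "Q x f a" using solvable sub by blast
      have earlier: "f u = (f(x := a)) u" if "v \<in> insert x S" "r u < r v" for u v
        using that insert.hyps(2) by fastforce
      have "Q v (f(x := a)) ((f(x := a)) v)" if v: "v \<in> insert x S" for v
      proof (cases "v = x")
        case True
        have "Q x (f(x := a)) a"
          using depends_on_earlier[of x f "f(x := a)" a] earlier[of x] a sub by blast
        then show ?thesis using True by simp
      next
        case False
        then show ?thesis
          using depends_on_earlier[of v f "f(x := a)" "f v"] earlier[of v] f v sub by (simp add: subset_iff)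
      qed
      then show "\<exists>f. \<forall>v\<in>insert x S. Q v f (f v)" by blast
    qed
  qed
  then show ?thesis using assms(1) by blast
qed

lemma degenerate_subset:
  assumes "degenerate k V E" "A \<subseteq> V"
  shows "degenerate k A E"
  using assms unfolding degenerate_def by blast

lemma ranking_extend_last:
  assumes "finite A" "w \<in> A" "card {u \<in> A. E w u} \<le> k"
    and r: "inj_on r (A - {w})" "r ` (A - {w}) \<subseteq> {..<card A - 1}"
      "\<forall>v\<in>A - {w}. card {u \<in> A - {w}. E v u \<and> r u < r v} \<le> k"
  defines "r' \<equiv> r(w := card A - 1)"
  shows "inj_on r' A \<and> r' ` A \<subseteq> {..<card A} \<and> (\<forall>v\<in>A. card {u \<in> A. E v u \<and> r' u < r' v} \<le> k)"
proof (intro conjI ballI)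
  have below_w: "r' v < r' w" if "v \<in> A - {w}" for v
    using r(2) that unfolding r'_def by auto
  show "inj_on r' A"
    using r(1) below_w unfolding r'_def inj_on_def by (metis DiffI fun_upd_other less_irrefl singletonD)
  have "card A > 0" using assms(1,2) card_gt_0_iff by blast
  then show "r' ` A \<subseteq> {..<card A}" using r(2) unfolding r'_def by auto
  fix v assume v: "v \<in> A"
  show "card {u \<in> A. E v u \<and> r' u < r' v} \<le> k"
  proof (cases "v = w")
    case True
    have "card {u \<in> A. E v u \<and> r' u < r' v} \<le> card {u \<in> A. E w u}"
      using True assms(1) by (intro card_mono) auto
    then show ?thesis using assms(3) by linarith
  next
    case False
    have "{u \<in> A. E v u \<and> r' u < r' v} \<subseteq> {u \<in> A - {w}. E v u \<and> r u < r v}"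
    proof
      fix u assume u: "u \<in> {u \<in> A. E v u \<and> r' u < r' v}"
      then have "u \<noteq> w" using below_w[of v] v False by auto
      then show "u \<in> {u \<in> A - {w}. E v u \<and> r u < r v}"
        using u False unfolding r'_def by auto
    qed
    then have "card {u \<in> A. E v u \<and> r' u < r' v} \<le> card {u \<in> A - {w}. E v u \<and> r u < r v}"
      using assms(1) by (intro card_mono) auto
    moreover have "card {u \<in> A - {w}. E v u \<and> r u < r v} \<le> k" using r(3) v False by blast
    ultimately show ?thesis by linarith
  qed
qed

lemma degenerate_ranking:
  assumes "finite V" "degenerate k V E"
  shows "\<exists>r :: 'a \<Rightarrow> nat. inj_on r V \<and> r ` V \<subseteq> {..<card V} \<and>
           (\<forall>v\<in>V. card {u \<in> V. E v u \<and> r u < r v} \<le> k)"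
  using assms
proof (induction V rule: finite_remove_induct)
  case empty
  then show ?case by simp
next
  case (remove A)
  obtain w where w: "w \<in> A" "card {u \<in> A. E w u} \<le> k"
    using remove.prems remove.hyps(2) unfolding degenerate_def by blast
  \<comment> \<open>the vertex of small degree is put last\<close>
  obtain r :: "'a \<Rightarrow> nat" where "inj_on r (A - {w})" "r ` (A - {w}) \<subseteq> {..<card A - 1}"
    "\<forall>v\<in>A - {w}. card {u \<in> A - {w}. E v u \<and> r u < r v} \<le> k"
    using remove.IH[OF w(1) degenerate_subset[OF remove.prems]] w(1) remove.hyps(1) by auto
  then show ?case using ranking_extend_last[where E = E, OF remove.hyps(1) w] by blast
qed

lemma graph_degeneracy_order:
  assumes "graph V E" "degenerate k V E"
  obtains r where "degeneracy_order k V E r"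
proof -
  obtain r :: "'a \<Rightarrow> nat" where r: "inj_on r V" "\<forall>v\<in>V. card {u \<in> V. E v u \<and> r u < r v} \<le> k"
    using degenerate_ranking[OF graphD(1)[OF assms(1)] assms(2)] by blast
  have "back_nbrs E r v = {u \<in> V. E v u \<and> r u < r v}" for v
    using graphD(3)[OF assms(1)] unfolding back_nbrs_def by blast
  then show ?thesis using r by (intro that[of r]) (simp add: degeneracy_order_def)
qed

lemma sum_degree_le:
  assumes "graph V E" "degeneracy_order k V E r"
  shows "(\<Sum>v\<in>V. card {u. E v u}) \<le> 2 * k * card V"
proof -
  note G = graphD[OF assms(1)]
  have inj: "inj_on r V" and back_le: "\<And>v. v \<in> V \<Longrightarrow> card (back_nbrs E r v) \<le> k"
    using assms(2) unfolding degeneracy_order_def by blast+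
  define fwd where "fwd v = {u. E v u \<and> r v < r u}" for v
  have nbrs_split: "{u. E v u} \<subseteq> back_nbrs E r v \<union> fwd v" if "v \<in> V" for v
  proof
    fix u assume "u \<in> {u. E v u}"
    then have "E v u" and "u \<in> V" "u \<noteq> v"
      using G(3)[of v u] G(5)[of v] by auto
    then have "r u \<noteq> r v" using inj_onD[OF inj] that by blast
    then show "u \<in> back_nbrs E r v \<union> fwd v"
      using \<open>E v u\<close> unfolding back_nbrs_def fwd_def by auto
  qed
  have card_eq_sum: "card {u. E v u \<and> P u} = (\<Sum>u\<in>V. if E v u \<and> P u then 1 else 0)" for v P
  proof -
    have "{u. E v u \<and> P u} = V \<inter> {u. E v u \<and> P u}" using G(3) by blast
    then show ?thesis using G(1) by (simp add: sum.If_cases)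
  qed
  have E_commute: "E u v \<longleftrightarrow> E v u" for u v using G(4) by blast
  \<comment> \<open>double counting the edges directed from lower to higher rank\<close>
  have fwd_sum: "(\<Sum>v\<in>V. card (fwd v)) = (\<Sum>v\<in>V. card (back_nbrs E r v))"
    unfolding fwd_def back_nbrs_def card_eq_sum
    by (subst sum.swap) (simp add: E_commute)
  have "(\<Sum>v\<in>V. card {u. E v u}) \<le> (\<Sum>v\<in>V. card (back_nbrs E r v) + card (fwd v))"
    using nbrs_split graph_finite_nbrs[OF assms(1)]
    by (intro sum_mono order.trans[OF card_mono card_Un_le]) (auto simp: back_nbrs_def fwd_def)
  also have "\<dots> = 2 * (\<Sum>v\<in>V. card (back_nbrs E r v))"
    using fwd_sum by (simp add: sum.distrib)
  also have "\<dots> \<le> 2 * (\<Sum>v\<in>V. k)"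
    by (intro mult_le_mono2 sum_mono back_le)
  also have "\<dots> = 2 * k * card V" by simp
  finally show ?thesis .
qed

lemma earlier_within_dist_2_subset:
  assumes G: "graph V E" and inj: "inj_on r V" and v: "v \<in> V"
  shows "{u. r u < r v \<and> within_dist_2 E u v} \<subseteq> back_nbrs E r v \<union>
    (\<Union>z\<in>back_nbrs E r v. {u. E z u}) \<union> (\<Union>z\<in>{z. E v z \<and> r v < r z}. back_nbrs E r z)"
    (is "_ \<subseteq> ?B")
proof
  note G' = graphD[OF G]
  fix u assume "u \<in> {u. r u < r v \<and> within_dist_2 E u v}"
  then have ru: "r u < r v" and path: "E u v \<or> (\<exists>z. E u z \<and> E z v)"
    unfolding within_dist_2_def by auto
  show "u \<in> ?B"
  proof (cases "E u v")
    case True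
    then show ?thesis using ru G'(4) unfolding back_nbrs_def by blast
  next
    case False
    then obtain z where z: "E u z" "E z v" using path by blast
    have "r z \<noteq> r v" using inj_onD[OF inj _ G'(2)[OF z(2)] v] G'(5)[of v] z(2) by blast
    then consider "r z < r v" | "r v < r z" by linarith
    then show ?thesis
    proof cases
      case 1
      then have "z \<in> back_nbrs E r v" "u \<in> {u. E z u}"
        using z G'(4) unfolding back_nbrs_def by blast+
      then show ?thesis by blast
    next
      case 2
      then have "z \<in> {z. E v z \<and> r v < r z}" "u \<in> back_nbrs E r z"
        using z ru G'(4) unfolding back_nbrs_def by auto
      then show ?thesis by blast
    qed
  qed
qed

lemma card_earlier_within_dist_2_le:
  assumes G: "graph V E" and r: "degeneracy_order k V E r" and v: "v \<in> V"
    and deg_v: "card {u. E v u} \<le> d"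
    and deg_back: "\<And>z. z \<in> back_nbrs E r v \<Longrightarrow> card {u. E z u} \<le> d"
  shows "card {u. r u < r v \<and> within_dist_2 E u v} \<le> k + 2 * k * d"
proof -
  have inj: "inj_on r V" and back_le: "\<And>z. z \<in> V \<Longrightarrow> card (back_nbrs E r z) \<le> k"
    using r unfolding degeneracy_order_def by blast+
  define fwd where "fwd = {z. E v z \<and> r v < r z}"
  have fin_back: "finite (back_nbrs E r z)" for z
    unfolding back_nbrs_def by (rule graph_finite_nbrs[OF G])
  have fin_fwd: "finite fwd"
    unfolding fwd_def by (rule graph_finite_nbrs[OF G])
  have fin_nbrs: "finite {u. E z u}" for z
    using graph_finite_nbrs[OF G, of z "\<lambda>_. True"] by simp
  note earlier_within_dist_2_subset[OF G inj v, folded fwd_def]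
  then have "card {u. r u < r v \<and> within_dist_2 E u v} \<le>
      card (back_nbrs E r v \<union> (\<Union>z\<in>back_nbrs E r v. {u. E z u}) \<union> (\<Union>z\<in>fwd. back_nbrs E r z))"
    using fin_back fin_fwd fin_nbrs by (intro card_mono) auto
  also have "\<dots> \<le>
      card (back_nbrs E r v) + card (\<Union>z\<in>back_nbrs E r v. {u. E z u}) + card (\<Union>z\<in>fwd. back_nbrs E r z)"
    using card_Un_le[of "back_nbrs E r v \<union> (\<Union>z\<in>back_nbrs E r v. {u. E z u})" "\<Union>z\<in>fwd. back_nbrs E r z"]
      card_Un_le[of "back_nbrs E r v" "\<Union>z\<in>back_nbrs E r v. {u. E z u}"] by linarith
  also have "card (\<Union>z\<in>back_nbrs E r v. {u. E z u}) \<le> k * d"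
  proof -
    have "card (\<Union>z\<in>back_nbrs E r v. {u. E z u}) \<le> (\<Sum>z\<in>back_nbrs E r v. card {u. E z u})"
      by (rule card_UN_le[OF fin_back])
    also have "\<dots> \<le> card (back_nbrs E r v) * d"
      using sum_bounded_above[of "back_nbrs E r v" "\<lambda>z. card {u. E z u}" d] deg_back by simp
    also have "\<dots> \<le> k * d" using back_le[OF v] by simp
    finally show ?thesis .
  qed
  also have "card (\<Union>z\<in>fwd. back_nbrs E r z) \<le> d * k"
  proof -
    have "card (\<Union>z\<in>fwd. back_nbrs E r z) \<le> (\<Sum>z\<in>fwd. card (back_nbrs E r z))"
      by (rule card_UN_le[OF fin_fwd])
    also have "\<dots> \<le> (\<Sum>z\<in>fwd. k)"
      using back_le graphD(3)[OF G] unfolding fwd_def by (intro sum_mono) auto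
    also have "\<dots> = card fwd * k" by simp
    also have "card fwd \<le> d"
      using card_mono[OF fin_nbrs, of fwd v] deg_v unfolding fwd_def by fastforce
    finally show ?thesis by simp
  qed
  also have "card (back_nbrs E r v) \<le> k" by (rule back_le[OF v])
  finally show ?thesis by (simp add: algebra_simps)
qed

definition fresh_color ::
  "nat \<Rightarrow> 'a set \<Rightarrow> ('a \<Rightarrow> 'a \<Rightarrow> bool) \<Rightarrow> ('a \<Rightarrow> nat) \<Rightarrow> ('a \<Rightarrow> nat) \<Rightarrow> 'a \<Rightarrow> nat \<Rightarrow> bool" where
  "fresh_color a L E r g v x \<longleftrightarrow>
     (\<forall>u\<in>L. r u < r v \<longrightarrow> g u = x \<longrightarrow> (if x < a then \<not> E v u else \<not> within_dist_2 E u v))"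

lemma ab_coloring_if_fresh:
  assumes G: "graph V E" and inj: "inj_on r L"
    and fresh: "\<And>v. v \<in> L \<Longrightarrow> f v < a + b \<and> fresh_color a L E r f v (f v)"
  shows "ab_coloring a b L E f"
proof -
  note G' = graphD[OF G]
  have earlier: "\<not> E x y \<and> (a \<le> f x \<longrightarrow> \<not> within_dist_2 E x y)"
    if "x \<in> L" "y \<in> L" "f x = f y" "r x < r y" for x y
  proof -
    have "if f y < a then \<not> E y x else \<not> within_dist_2 E x y"
      using fresh[OF that(2)] that unfolding fresh_color_def by blast
    then show ?thesis using that(3) G'(4) by (auto simp: within_dist_2_def split: if_splits)
  qed
  have same_color: "\<not> E x y \<and> (a \<le> f x \<longrightarrow> \<not> within_dist_2 E x y)"
    if "x \<in> L" "y \<in> L" "x \<noteq> y" "f x = f y" for x y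
  proof -
    have "r x \<noteq> r y" using inj_onD[OF inj] that by blast
    then consider "r x < r y" | "r y < r x" by linarith
    then show ?thesis
    proof cases
      case 1
      then show ?thesis using earlier[of x y] that by blast
    next
      case 2
      then show ?thesis using earlier[of y x] that G'(4)[of x y] within_dist_2_sym[OF G, of x y] by auto
    qed
  qed
  show ?thesis
    unfolding ab_coloring_def
  proof (intro conjI allI impI ballI)
    fix v assume "v \<in> L"
    then show "f v < a + b" using fresh by blast
  next
    fix i
    show "independent_set E {v \<in> L. f v = i}"
      unfolding independent_set_def using same_color G'(5) by blast
  next
    fix i assume "a \<le> i \<and> i < a + b"
    then show "two_independent_set E {v \<in> L. f v = i}"
      unfolding two_independent_set_iff using same_color by simp
  qed
qed

lemma subset_if_image_covers:
  assumes "finite B" "card B \<le> k" "{..<k} \<subseteq> g ` (B \<inter> L)"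
  shows "B \<subseteq> L"
proof -
  have "k \<le> card (g ` (B \<inter> L))"
    using card_mono[OF _ assms(3)] assms(1) by simp
  also have "\<dots> \<le> card (B \<inter> L)" by (rule card_image_le) (use assms(1) in simp)
  finally have "card B \<le> card (B \<inter> L)" using assms(2) by linarith
  then show ?thesis using card_seteq[OF assms(1), of "B \<inter> L"] by blast
qed

lemma exists_color_not_in_image:
  assumes "finite C" "card C < m"
  shows "\<exists>x. k \<le> x \<and> x < k + m \<and> x \<notin> g ` C"
proof (rule ccontr)
  assume "\<not> ?thesis"
  then have "{k..<k + m} \<subseteq> g ` C" by force
  then have "card {k..<k + m} \<le> card (g ` C)" using assms(1) by (intro card_mono) auto
  then show False using card_image_le[OF assms(1), of g] assms(2) by simp
qed

definition low_degree_vertices :: "nat \<Rightarrow> 'a set \<Rightarrow> ('a \<Rightarrow> 'a \<Rightarrow> bool) \<Rightarrow> 'a set" where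
  "low_degree_vertices D V E = {v \<in> V. card {u. E v u} < D}"

lemma exists_fresh_color:
  assumes G: "graph V E" and r: "degeneracy_order k V E r" and "1 \<le> k"
    and v: "v \<in> low_degree_vertices D V E"
  shows "\<exists>x < k + 2 * k * D. fresh_color k (low_degree_vertices D V E) E r g v x"
proof (cases "\<exists>i < k. fresh_color k (low_degree_vertices D V E) E r g v i")
  case True
  then show ?thesis by (meson less_le_trans le_add1)
next
  case False
  let ?L = "low_degree_vertices D V E"
  have vV: "v \<in> V" and deg_v: "card {u. E v u} \<le> D - 1"
    using v unfolding low_degree_vertices_def by auto
  have fin_back: "finite (back_nbrs E r v)"
    unfolding back_nbrs_def by (rule graph_finite_nbrs[OF G])
  \<comment> \<open>all k independent colors are blocked, so every earlier neighbour has low degree\<close>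
  have "{..<k} \<subseteq> g ` (back_nbrs E r v \<inter> ?L)"
    using False unfolding fresh_color_def back_nbrs_def by force
  then have "back_nbrs E r v \<subseteq> ?L"
    using subset_if_image_covers fin_back r vV unfolding degeneracy_order_def by blast
  then have deg_back: "card {u. E z u} \<le> D - 1" if "z \<in> back_nbrs E r v" for z
    using that unfolding low_degree_vertices_def by fastforce
  define C where "C = {u. r u < r v \<and> within_dist_2 E u v}"
  have "card C \<le> k + 2 * k * (D - 1)"
    unfolding C_def by (rule card_earlier_within_dist_2_le[OF G r vV deg_v deg_back])
  also have "\<dots> < 2 * k * D"
    using \<open>1 \<le> k\<close> deg_v v unfolding low_degree_vertices_def
    by (cases D) (auto simp: algebra_simps)
  finally have "card C < 2 * k * D" .
  moreover have "finite C"
  proof (rule finite_subset)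
    show "C \<subseteq> V" using graphD(2)[OF G] unfolding C_def within_dist_2_def by blast
  qed (rule graphD(1)[OF G])
  ultimately obtain x where x: "k \<le> x" "x < k + 2 * k * D" "x \<notin> g ` C"
    using exists_color_not_in_image by blast
  then have "fresh_color k ?L E r g v x"
    unfolding fresh_color_def C_def by auto
  then show ?thesis using x(2) by blast
qed

lemma colorable_add_singleton_classes:
  assumes c: "ab_coloring a b (V - H) E c" and "finite H"
  shows "colorable a (b + card H) V E"
proof -
  obtain h where h: "bij_betw h H {0..<card H}"
    using ex_bij_betw_finite_nat[OF assms(2)] by blast
  define c' where "c' v = (if v \<in> H then a + b + h v else c v)" for v
  have old_classes: "{v \<in> V. c' v = i} = {v \<in> V - H. c v = i}" if "i < a + b" for i
    using that unfolding c'_def by auto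
  have "ab_coloring a (b + card H) V E c'"
    unfolding ab_coloring_def
  proof (intro conjI allI impI ballI)
    fix v assume "v \<in> V"
    show "c' v < a + (b + card H)"
    proof (cases "v \<in> H")
      case True
      then show ?thesis using bij_betwE[OF h] unfolding c'_def by fastforce
    next
      case False
      then have "c v < a + b" using c \<open>v \<in> V\<close> unfolding ab_coloring_def by blast
      then show ?thesis using False unfolding c'_def by simp
    qed
  next
    fix i assume "i < a"
    then show "independent_set E {v \<in> V. c' v = i}"
      using c old_classes[of i] unfolding ab_coloring_def by simp
  next
    fix i assume i: "a \<le> i \<and> i < a + (b + card H)"
    show "two_independent_set E {v \<in> V. c' v = i}"
    proof (cases "i < a + b")
      case True
      then show ?thesis using c i old_classes[of i] unfolding ab_coloring_def by simp
    next
      case False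
      have in_H: "v \<in> H" if "v \<in> V" "c' v = i" for v
      proof (rule ccontr)
        assume "v \<notin> H"
        then have "c' v < a + b" using c that(1) unfolding c'_def ab_coloring_def by simp
        then show False using that(2) False by simp
      qed
      have "x = y" if "x \<in> {v \<in> V. c' v = i}" "y \<in> {v \<in> V. c' v = i}" for x y
      proof -
        have "x \<in> H" "y \<in> H" using in_H that by auto
        then have "h x = h y" using that unfolding c'_def by simp
        then show ?thesis using inj_onD[OF bij_betw_imp_inj_on[OF h]] \<open>x \<in> H\<close> \<open>y \<in> H\<close> by blast
      qed
      then show ?thesis unfolding two_independent_set_def by blast
    qed
  qed
  then show ?thesis using colorable_iff_ab_coloring by blast
qed

lemma colorable_by_degree_threshold:
  assumes G: "graph V E" and r: "degeneracy_order k V E r" and "1 \<le> k"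
  shows "colorable k (2 * k * D + card (V - low_degree_vertices D V E)) V E"
proof -
  let ?L = "low_degree_vertices D V E"
  have L_sub: "?L \<subseteq> V" unfolding low_degree_vertices_def by blast
  have "\<exists>f. \<forall>v\<in>?L. f v < k + 2 * k * D \<and> fresh_color k ?L E r f v (f v)"
  proof (rule rank_recursion_exists[where r = r])
    show "finite ?L" using finite_subset[OF L_sub graphD(1)[OF G]] .
    show "\<exists>x. x < k + 2 * k * D \<and> fresh_color k ?L E r g v x" if "v \<in> ?L" for v g
      using exists_fresh_color[OF G r \<open>1 \<le> k\<close> that] by blast
    show "x < k + 2 * k * D \<and> fresh_color k ?L E r g' v x"
      if "\<And>u. r u < r v \<Longrightarrow> g u = g' u" "x < k + 2 * k * D \<and> fresh_color k ?L E r g v x"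
      for v g g' x
      using that unfolding fresh_color_def by simp
  qed
  then obtain f where "\<forall>v\<in>?L. f v < k + 2 * k * D \<and> fresh_color k ?L E r f v (f v)" by blast
  then have "ab_coloring k (2 * k * D) ?L E f"
    using r L_sub unfolding degeneracy_order_def
    by (intro ab_coloring_if_fresh[OF G]) (auto intro: inj_on_subset)
  moreover have "V - (V - ?L) = ?L" using L_sub by blast
  ultimately show ?thesis
    using colorable_add_singleton_classes[of k "2 * k * D" V "V - ?L"] graphD(1)[OF G] by simp
qed

lemma card_high_degree_mult_le:
  assumes G: "graph V E" and r: "degeneracy_order k V E r"
  shows "card (V - low_degree_vertices D V E) * D \<le> 2 * k * card V"
proof -
  let ?H = "V - low_degree_vertices D V E"
  have "card ?H * D = (\<Sum>v\<in>?H. D)" by simp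
  also have "\<dots> \<le> (\<Sum>v\<in>?H. card {u. E v u})"
    by (rule sum_mono) (auto simp: low_degree_vertices_def)
  also have "\<dots> \<le> (\<Sum>v\<in>V. card {u. E v u})"
    by (rule sum_mono2[OF graphD(1)[OF G]]) auto
  also have "\<dots> \<le> 2 * k * card V" by (rule sum_degree_le[OF G r])
  finally show ?thesis .
qed

lemma ceiling_sqrt_add_sqrt_le:
  assumes "1 \<le> n" and t: "sqrt 2 \<le> t"
  shows "real (nat \<lceil>sqrt (real n)\<rceil>) + sqrt (real n) \<le> 2 * t * sqrt (real n)"
proof -
  have "1 \<le> t" using t real_sqrt_ge_1_iff[of 2] by linarith
  show ?thesis
  proof (cases "n = 1")
    case True
    then show ?thesis using \<open>1 \<le> t\<close> by simp
  next
    case False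
    define s where "s = sqrt (real n)"
    have s: "sqrt 2 \<le> s" using False assms(1) unfolding s_def by simp
    have "(sqrt 2 - 1) * sqrt 2 \<le> (t - 1) * s"
      using s t \<open>1 \<le> t\<close> by (intro mult_mono) auto
    moreover have "sqrt 2 \<le> 3 / 2" by (rule real_le_lsqrt) (auto simp: power2_eq_square)
    ultimately have "2 * s + 1 \<le> 2 * t * s" by (simp add: algebra_simps)
    moreover have "real (nat \<lceil>s\<rceil>) < s + 1"
      using ceiling_correct[of s] unfolding s_def by simp
    ultimately show ?thesis unfolding s_def by linarith
  qed
qed

lemma le_sqrt_if_mult_ceiling_sqrt_le:
  assumes "1 \<le> n" and "h * nat \<lceil>sqrt (real n)\<rceil> \<le> c * n"
  shows "real h \<le> real c * sqrt (real n)"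
proof -
  define s where "s = sqrt (real n)"
  have "0 < s" using assms(1) unfolding s_def by simp
  have "real h * s \<le> real h * real (nat \<lceil>s\<rceil>)"
    by (intro mult_left_mono) linarith+
  also have "\<dots> = real (h * nat \<lceil>s\<rceil>)" by simp
  also have "\<dots> \<le> real (c * n)" using assms(2) unfolding s_def of_nat_le_iff .
  also have "\<dots> = real c * s * s" unfolding s_def by simp
  finally show ?thesis using \<open>0 < s\<close> unfolding s_def by simp
qed

theorem mainTheorem12:
  fixes V :: "'a set" and E :: "'a \<Rightarrow> 'a \<Rightarrow> bool" and k b :: nat
  assumes "k \<ge> 1"
    and "graph V E"
    and "degenerate k V E"
    and "real b \<ge> 4 * real k * sqrt (real k + 1) * sqrt (real (card V))"
  shows "colorable k b V E"
proof (cases "V = {}")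
  case True
  then show ?thesis unfolding colorable_def independent_set_def two_independent_set_def by simp
next
  case False
  define n where "n = card V"
  define D where "D = nat \<lceil>sqrt (real n)\<rceil>"
  define H where "H = V - low_degree_vertices D V E"
  have "1 \<le> n" using False graphD(1)[OF assms(2)] unfolding n_def by (simp add: Suc_le_eq card_gt_0_iff)
  obtain r where r: "degeneracy_order k V E r" using graph_degeneracy_order[OF assms(2,3)] .
  have "real (card H) \<le> real (2 * k) * sqrt (real n)"
    using le_sqrt_if_mult_ceiling_sqrt_le[OF \<open>1 \<le> n\<close>] card_high_degree_mult_le[OF assms(2) r]
    unfolding H_def D_def n_def by blast
  then have "real (2 * k * D + card H) \<le> 2 * k * (real D + sqrt (real n))"
    by (simp add: algebra_simps)
  also have "\<dots> \<le> 2 * k * (2 * sqrt (real k + 1) * sqrt (real n))"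
    unfolding D_def using \<open>1 \<le> n\<close> assms(1)
    by (intro mult_left_mono ceiling_sqrt_add_sqrt_le) auto
  also have "\<dots> \<le> real b" using assms(4) unfolding n_def by (simp add: mult_ac)
  finally have "2 * k * D + card H \<le> b" by linarith
  moreover have "colorable k (2 * k * D + card H) V E"
    unfolding H_def by (rule colorable_by_degree_threshold[OF assms(2) r assms(1)])
  ultimately show ?thesis using colorable_mono by blast
qed

end
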